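(* Let $P$ and $Q$ be recurrent stochastic matrices over a countable set $\Omega$, and let $\rho$ be a *-automorphism of $\ell^\infty(\Omega)$. If there is a $\rho$-unitary isomorphism $Arv(P)\to Arv(Q)$, then $P_{ij}=Q_{\sigma_\rho(i)\sigma_\rho(j)}$ for all $i,j\in\Omega$.
   Context: A stochastic matrix over $\Omega$ has nonnegative entries and row sums $1$; $P^{(n)}_{ij}$ is the $(i,j)$ entry of $P^n$; $P$ is recurrent if $\sum_{n\ge1}P^{(n)}_{ii}=\infty$ for all $i$. $\sigma_\rho$ is the permutation of $\Omega$ with $\rho(p_j)=p_{\sigma_\rho(j)}$, $p_j$ the indicator of $\{j\}$. $Arv(P)$: $Arv(P)_0=\ell^\infty(\Omega)$; $Arv(P)_n$ ($n\ge1$) is the set of complex $\Omega\times\Omega$ matrices $A=[a_{ij}]$ with $a_{ij}=0$ whenever $P^{(n)}_{ij}=0$ and $\sup_j\sum_i|a_{ij}|^2<\infty$, a W*-correspondence over $\ell^\infty(\Omega)$ with actions by diagonal matrices and inner product $\mathrm{Diag}(A^*B)$; $U^P_{n,m}(A\otimes B)=(\sqrt{P^{n+m}})^{\flat}*[(\sqrt{P^n}*A)(\sqrt{P^m}*B)]$ for $n,m\ge1$ ($*$ entrywise product, $\sqrt\cdot$ entrywise, $M^\flat_{ik}=M_{ik}^{-1}$ if $M_{ik}>0$, else $0$), $U_{0,n},U_{n,0}$ module actions. A $\rho$-unitary isomorphism $V:Arv(P)\to Arv(Q)$ is a family $(V_n)$ with $V_0=\rho$, each $V_n$ ($n\ge1$)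 surjective linear with $V_n(a\xi b)=\rho(a)V_n(\xi)\rho(b)$ and $\rho^{-1}(\langle V_n\xi,V_n\eta\rangle)=\langle\xi,\eta\rangle$, and $V_{n+m}U^P_{n,m}=U^Q_{n,m}(V_n\otimes V_m)$. *)

theory Defs
  imports "HOL-Analysis.Analysis"
begin

definition stochastic :: "('a \<Rightarrow> 'a \<Rightarrow> real) \<Rightarrow> bool" where
  "stochastic P \<longleftrightarrow> (\<forall>i j. 0 \<le> P i j) \<and> (\<forall>i. ((\<lambda>j. P i j) has_sum 1) UNIV)"

primrec mpow :: "('a \<Rightarrow> 'a \<Rightarrow> real) \<Rightarrow> nat \<Rightarrow> 'a \<Rightarrow> 'a \<Rightarrow> real" where
  "mpow P 0 = (\<lambda>i j. if i = j then 1 else 0)"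
| "mpow P (Suc n) = (\<lambda>i k. \<Sum>\<^sub>\<infinity>j. mpow P n i j * P j k)"

definition recurrent :: "('a \<Rightarrow> 'a \<Rightarrow> real) \<Rightarrow> bool" where
  "recurrent P \<longleftrightarrow> (\<forall>i. \<not> summable (\<lambda>n. mpow P (Suc n) i i))"

definition linf :: "('a \<Rightarrow> complex) set" where
  "linf = {f. \<exists>C. \<forall>x. cmod (f x) \<le> C}"

definition star_automorphism :: "(('a \<Rightarrow> complex) \<Rightarrow> ('a \<Rightarrow> complex)) \<Rightarrow> bool" where
  "star_automorphism \<rho> \<longleftrightarrow>
     bij_betw \<rho> linf linf \<and>
     (\<forall>f\<in>linf. \<forall>g\<in>linf. \<rho> (\<lambda>x. f x + g x) = (\<lambda>x. \<rho> f x + \<rho> g x)) \<and>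
     (\<forall>f\<in>linf. \<forall>c. \<rho> (\<lambda>x. c * f x) = (\<lambda>x. c * \<rho> f x)) \<and>
     (\<forall>f\<in>linf. \<forall>g\<in>linf. \<rho> (\<lambda>x. f x * g x) = (\<lambda>x. \<rho> f x * \<rho> g x)) \<and>
     (\<forall>f\<in>linf. \<rho> (\<lambda>x. cnj (f x)) = (\<lambda>x. cnj (\<rho> f x)))"

definition sigma_of :: "(('a \<Rightarrow> complex) \<Rightarrow> ('a \<Rightarrow> complex)) \<Rightarrow> 'a \<Rightarrow> 'a" where
  "sigma_of \<rho> j = (THE k. \<rho> (indicator {j}) = indicator {k})"

definition arv :: "('a \<Rightarrow> 'a \<Rightarrow> real) \<Rightarrow> nat \<Rightarrow> ('a \<Rightarrow> 'a \<Rightarrow> complex) set" where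
  "arv P n = {A. (\<forall>i j. mpow P n i j = 0 \<longrightarrow> A i j = 0) \<and>
                 (\<forall>j. (\<lambda>i. (cmod (A i j))\<^sup>2) summable_on UNIV) \<and>
                 (\<exists>C. \<forall>j. (\<Sum>\<^sub>\<infinity>i. (cmod (A i j))\<^sup>2) \<le> C)}"

definition arv_act :: "('a \<Rightarrow> complex) \<Rightarrow> ('a \<Rightarrow> 'a \<Rightarrow> complex) \<Rightarrow> ('a \<Rightarrow> complex) \<Rightarrow> ('a \<Rightarrow> 'a \<Rightarrow> complex)" where
  "arv_act a A b = (\<lambda>i j. a i * A i j * b j)"

definition arv_inner :: "('a \<Rightarrow> 'a \<Rightarrow> complex) \<Rightarrow> ('a \<Rightarrow> 'a \<Rightarrow> complex) \<Rightarrow> ('a \<Rightarrow> complex)" where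
  "arv_inner A B = (\<lambda>j. \<Sum>\<^sub>\<infinity>i. cnj (A i j) * B i j)"

definition flat :: "real \<Rightarrow> real" where
  "flat x = (if x > 0 then inverse x else 0)"

definition arvU :: "('a \<Rightarrow> 'a \<Rightarrow> real) \<Rightarrow> nat \<Rightarrow> nat \<Rightarrow> ('a \<Rightarrow> 'a \<Rightarrow> complex) \<Rightarrow> ('a \<Rightarrow> 'a \<Rightarrow> complex) \<Rightarrow> ('a \<Rightarrow> 'a \<Rightarrow> complex)" where
  "arvU P n m A B = (\<lambda>i k. complex_of_real (flat (sqrt (mpow P (n + m) i k))) *
      (\<Sum>\<^sub>\<infinity>j. (complex_of_real (sqrt (mpow P n i j)) * A i j) *
               (complex_of_real (sqrt (mpow P m j k)) * B j k)))"

text \<open>rho-unitary isomorphism Arv(P) -> Arv(Q); V_0 = rho is implicit, V n for n >= 1.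
  The compatibility with U_{0,n}, U_{n,0} is the bimodule property.\<close>
definition rho_unitary_iso ::
  "('a \<Rightarrow> 'a \<Rightarrow> real) \<Rightarrow> ('a \<Rightarrow> 'a \<Rightarrow> real) \<Rightarrow> (('a \<Rightarrow> complex) \<Rightarrow> ('a \<Rightarrow> complex))
    \<Rightarrow> (nat \<Rightarrow> ('a \<Rightarrow> 'a \<Rightarrow> complex) \<Rightarrow> ('a \<Rightarrow> 'a \<Rightarrow> complex)) \<Rightarrow> bool" where
  "rho_unitary_iso P Q \<rho> V \<longleftrightarrow>
     (\<forall>n\<ge>1. V n ` arv P n = arv Q n) \<and>
     (\<forall>n\<ge>1. \<forall>A\<in>arv P n. \<forall>B\<in>arv P n. V n (\<lambda>i j. A i j + B i j) = (\<lambda>i j. V n A i j + V n B i j)) \<and>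
     (\<forall>n\<ge>1. \<forall>A\<in>arv P n. \<forall>c. V n (\<lambda>i j. c * A i j) = (\<lambda>i j. c * V n A i j)) \<and>
     (\<forall>n\<ge>1. \<forall>A\<in>arv P n. \<forall>a\<in>linf. \<forall>b\<in>linf.
        V n (arv_act a A b) = arv_act (\<rho> a) (V n A) (\<rho> b)) \<and>
     (\<forall>n\<ge>1. \<forall>A\<in>arv P n. \<forall>B\<in>arv P n.
        arv_inner (V n A) (V n B) = \<rho> (arv_inner A B)) \<and>
     (\<forall>n\<ge>1. \<forall>m\<ge>1. \<forall>A\<in>arv P n. \<forall>B\<in>arv P m.
        V (n + m) (arvU P n m A B) = arvU Q n m (V n A) (V m B))"

end

theory Submission
  imports Defs
begin

text \<open>
  Testing the isomorphism on the matrix units \<open>E\<^sub>i\<^sub>j\<close> shows that \<open>\<sigma>\<close> transports the supports of all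
  powers, \<open>P\<^sup>n(i,j) > 0 \<longleftrightarrow> Q\<^sup>n(\<sigma> i, \<sigma> j) > 0\<close>, and, through the maps \<open>U\<^sub>n\<^sub>,\<^sub>m\<close>, that the
  ratios \<open>r\<^sub>n(i,j) = Q\<^sup>n(\<sigma> i, \<sigma> j) / P\<^sup>n(i,j)\<close> are multiplicative along paths,
  \<open>r\<^sub>n\<^sub>+\<^sub>m(i,k) = r\<^sub>n(i,j) r\<^sub>m(j,k)\<close>.
  On the return times of a state \<open>i\<close> this makes \<open>r\<^sub>n(i,i) = c\<^sup>n\<close>, and \<open>c \<noteq> 1\<close> would make one of
  the two return series \<open>\<Sum> P\<^sup>n(i,i)\<close>, \<open>\<Sum> Q\<^sup>n(\<sigma> i, \<sigma> i)\<close> converge; so \<open>r\<^sub>n(i,i) = 1\<close>.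
  Consequently the common mass \<open>\<Sum>\<^sub>j min (P\<^sup>t(i,j)) (Q\<^sup>t(\<sigma> i, \<sigma> j))\<close> of the \<open>i\<close>-th rows drops
  at every step by at least \<open>P\<^sup>t(i,i)\<close> times the total variation distance between the \<open>i\<close>-th
  rows of \<open>P\<close> and \<open>Q \<circ> \<sigma>\<close>. The mass stays in \<open>[0,1]\<close> while \<open>\<Sum>\<^sub>t P\<^sup>t(i,i)\<close> diverges, so that
  distance is zero.
\<close>

section \<open>Infinite sums\<close>

lemma has_sum_single_point: "((\<lambda>x. if x = a then c else 0) has_sum (c::'b::{comm_monoid_add,t2_space})) UNIV"
proof -
  have "((\<lambda>x. if x = a then c else 0) has_sum c) {a}" by (simp add: has_sum_finiteI)
  then show ?thesis by (rule has_sum_cong_neutral[THEN iffD1, rotated -1]) auto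
qed

lemma infsum_single_point: "(\<Sum>\<^sub>\<infinity>x. if x = a then c else 0) = (c::'b::{comm_monoid_add,t2_space})"
  by (rule infsumI[OF has_sum_single_point])

lemma has_sum_nonneg_term_le:
  fixes f :: "'a \<Rightarrow> real"
  assumes "(f has_sum s) UNIV" "\<And>x. 0 \<le> f x"
  shows "f a \<le> s"
  using finite_sum_le_infsum[OF has_sum_imp_summable[OF assms(1)], of "{a}"] assms
  by (simp add: infsumI)

lemma has_sum_diff:
  fixes f g :: "'a \<Rightarrow> real"
  assumes "(f has_sum a) A" "(g has_sum b) A"
  shows "((\<lambda>x. f x - g x) has_sum (a - b)) A"
  using has_sum_add[OF assms(1) has_sum_uminusI[OF assms(2)]] by simp

lemma summable_on_mult_unit_interval:
  fixes x w :: "'a \<Rightarrow> real"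
  assumes "x summable_on A" "\<And>j. 0 \<le> x j" "\<And>j. 0 \<le> w j" "\<And>j. w j \<le> 1"
  shows "(\<lambda>j. x j * w j) summable_on A"
  by (rule summable_on_comparison_test[OF assms(1)]) (use assms in \<open>auto intro: mult_left_le\<close>)

lemma infsum_mult_unit_interval_le:
  fixes x w :: "'a \<Rightarrow> real"
  assumes "x summable_on A" "\<And>j. 0 \<le> x j" "\<And>j. 0 \<le> w j" "\<And>j. w j \<le> 1"
  shows "(\<Sum>\<^sub>\<infinity>j\<in>A. x j * w j) \<le> (\<Sum>\<^sub>\<infinity>j\<in>A. x j)"
  by (rule infsum_mono[OF summable_on_mult_unit_interval[OF assms] assms(1)])
     (use assms in \<open>auto intro: mult_left_le\<close>)

lemma nonneg_infsum_swap:
  fixes f :: "'a \<Rightarrow> 'b \<Rightarrow> real"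
  assumes nonneg: "\<And>j k. 0 \<le> f j k"
    and rows: "\<And>j. f j summable_on UNIV"
    and outer: "(\<lambda>j. \<Sum>\<^sub>\<infinity>k. f j k) summable_on UNIV"
  shows "(\<lambda>k. \<Sum>\<^sub>\<infinity>j. f j k) summable_on UNIV"
    and "(\<Sum>\<^sub>\<infinity>k. \<Sum>\<^sub>\<infinity>j. f j k) = (\<Sum>\<^sub>\<infinity>j. \<Sum>\<^sub>\<infinity>k. f j k)"
proof -
  have joint: "(\<lambda>(j, k). f j k) summable_on UNIV \<times> UNIV"
  proof (rule summable_on_SigmaI[where g = "\<lambda>j. \<Sum>\<^sub>\<infinity>k. f j k"])
    show "((\<lambda>k. case (j, k) of (j, k) \<Rightarrow> f j k) has_sum (\<Sum>\<^sub>\<infinity>k. f j k)) UNIV" for j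
      using has_sum_infsum[OF rows[of j]] by simp
  qed (use outer nonneg in auto)
  have "(\<lambda>(k, j). f j k) summable_on UNIV \<times> UNIV"
    using joint summable_on_swap[of "\<lambda>(j, k). f j k" UNIV UNIV] by simp
  then have "((\<lambda>k. \<Sum>\<^sub>\<infinity>j. f j k) has_sum (\<Sum>\<^sub>\<infinity>(k, j)\<in>UNIV \<times> UNIV. f j k)) UNIV"
    using has_sum_Sigma'[OF has_sum_infsum, of "\<lambda>(k, j). f j k" UNIV "\<lambda>_. UNIV"]
      summable_on_SigmaD1[of "\<lambda>k j. f j k" UNIV "\<lambda>_. UNIV"] by simp
  then show "(\<lambda>k. \<Sum>\<^sub>\<infinity>j. f j k) summable_on UNIV"
    by (rule has_sum_imp_summable)
  show "(\<Sum>\<^sub>\<infinity>k. \<Sum>\<^sub>\<infinity>j. f j k) = (\<Sum>\<^sub>\<infinity>j. \<Sum>\<^sub>\<infinity>k. f j k)"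
    using infsum_swap_banach[OF joint] by simp
qed

lemma summable_Suc_geometric_dominated:
  fixes f :: "nat \<Rightarrow> real"
  assumes "0 \<le> c" "c < 1" "\<And>n. 0 \<le> f (Suc n)" "\<And>n. f (Suc n) \<le> c ^ Suc n"
  shows "summable (\<lambda>n. f (Suc n))"
  using assms by (intro summable_comparison_test[OF _ summable_mult[OF summable_geometric, of c c]]) auto

section \<open>Stochastic matrices and their powers\<close>

lemma stochastic_nonneg: "stochastic P \<Longrightarrow> 0 \<le> P i j"
  unfolding stochastic_def by blast

lemma stochastic_row_has_sum: "stochastic P \<Longrightarrow> ((\<lambda>j. P i j) has_sum 1) UNIV"
  unfolding stochastic_def by blast

lemma stochastic_le_1: "stochastic P \<Longrightarrow> P i j \<le> 1"
  by (rule has_sum_nonneg_term_le[OF stochastic_row_has_sum]) (auto intro: stochastic_nonneg)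

lemma stochastic_row_mult_unit_interval:
  assumes "stochastic P" "\<And>k. 0 \<le> w k" "\<And>k. w k \<le> 1"
  shows "(\<lambda>k. P j k * w k) summable_on UNIV"
    and "0 \<le> (\<Sum>\<^sub>\<infinity>k. P j k * w k)"
    and "(\<Sum>\<^sub>\<infinity>k. P j k * w k) \<le> 1"
proof -
  note row = has_sum_imp_summable[OF stochastic_row_has_sum[OF assms(1)]]
  show "(\<lambda>k. P j k * w k) summable_on UNIV"
    by (rule summable_on_mult_unit_interval[OF row]) (use assms stochastic_nonneg in auto)
  show "0 \<le> (\<Sum>\<^sub>\<infinity>k. P j k * w k)"
    by (rule infsum_nonneg) (use assms stochastic_nonneg[OF assms(1)] in auto)
  have "(\<Sum>\<^sub>\<infinity>k. P j k * w k) \<le> (\<Sum>\<^sub>\<infinity>k. P j k)"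
    by (rule infsum_mult_unit_interval_le[OF row]) (use assms stochastic_nonneg in auto)
  then show "(\<Sum>\<^sub>\<infinity>k. P j k * w k) \<le> 1"
    using infsumI[OF stochastic_row_has_sum[OF assms(1)]] by simp
qed

lemma stochastic_infsum_assoc:
  fixes x w :: "'a \<Rightarrow> real"
  assumes P: "stochastic P" and x: "x summable_on UNIV" "\<And>j. 0 \<le> x j"
    and w: "\<And>k. 0 \<le> w k" "\<And>k. w k \<le> 1"
  shows "(\<lambda>k. (\<Sum>\<^sub>\<infinity>j. x j * P j k) * w k) summable_on UNIV"
    and "(\<Sum>\<^sub>\<infinity>k. (\<Sum>\<^sub>\<infinity>j. x j * P j k) * w k) = (\<Sum>\<^sub>\<infinity>j. x j * (\<Sum>\<^sub>\<infinity>k. P j k * w k))"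
proof -
  note Pw = stochastic_row_mult_unit_interval[OF P w]
  define f where "f j k = x j * (P j k * w k)" for j k
  have columns: "(\<Sum>\<^sub>\<infinity>j. f j k) = (\<Sum>\<^sub>\<infinity>j. x j * P j k) * w k" for k
    unfolding f_def by (simp add: mult.assoc[symmetric] infsum_cmult_left')
  have rows: "(\<Sum>\<^sub>\<infinity>k. f j k) = x j * (\<Sum>\<^sub>\<infinity>k. P j k * w k)" for j
    unfolding f_def by (rule infsum_cmult_right')
  have "0 \<le> f j k" for j k
    unfolding f_def using x w stochastic_nonneg[OF P] by simp
  moreover have "f j summable_on UNIV" for j
    unfolding f_def by (rule summable_on_cmult_right[OF Pw(1)])
  moreover have "(\<lambda>j. \<Sum>\<^sub>\<infinity>k. f j k) summable_on UNIV"
    unfolding rows by (rule summable_on_mult_unit_interval[OF x]) (use Pw in auto)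
  ultimately have swap: "(\<lambda>k. \<Sum>\<^sub>\<infinity>j. f j k) summable_on UNIV"
      "(\<Sum>\<^sub>\<infinity>k. \<Sum>\<^sub>\<infinity>j. f j k) = (\<Sum>\<^sub>\<infinity>j. \<Sum>\<^sub>\<infinity>k. f j k)"
    by (rule nonneg_infsum_swap)+
  from swap show "(\<lambda>k. (\<Sum>\<^sub>\<infinity>j. x j * P j k) * w k) summable_on UNIV"
    and "(\<Sum>\<^sub>\<infinity>k. (\<Sum>\<^sub>\<infinity>j. x j * P j k) * w k) = (\<Sum>\<^sub>\<infinity>j. x j * (\<Sum>\<^sub>\<infinity>k. P j k * w k))"
    by (simp_all add: columns rows)
qed

lemma mpow_nonneg: "stochastic P \<Longrightarrow> 0 \<le> mpow P n i j"
  by (induction n arbitrary: j) (auto intro!: infsum_nonneg simp: stochastic_nonneg)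

lemma mpow_row_has_sum:
  assumes P: "stochastic P"
  shows "((\<lambda>k. mpow P n i k) has_sum 1) UNIV"
proof (induction n)
  case 0
  show ?case using has_sum_single_point[of i "1::real"] by (simp add: eq_commute)
next
  case (Suc n)
  note assoc = stochastic_infsum_assoc[OF P has_sum_imp_summable[OF Suc.IH] mpow_nonneg[OF P],
      of "\<lambda>_. 1", simplified]
  have "(\<Sum>\<^sub>\<infinity>k. mpow P (Suc n) i k) = (\<Sum>\<^sub>\<infinity>j. mpow P n i j)"
    using assoc(2) infsumI[OF stochastic_row_has_sum[OF P]] by simp
  also have "\<dots> = 1"
    by (rule infsumI[OF Suc.IH])
  finally show ?case
    using has_sum_infsum[OF assoc(1)] by simp
qed

lemma mpow_le_1: "stochastic P \<Longrightarrow> mpow P n i j \<le> 1"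
  by (rule has_sum_nonneg_term_le[OF mpow_row_has_sum]) (auto intro: mpow_nonneg)

lemma mpow_Suc_0 [simp]: "mpow P (Suc 0) = P"
proof (intro ext)
  fix i k
  have "(\<lambda>j. (if i = j then 1 else 0) * P j k) = (\<lambda>j. if j = i then P i k else 0)"
    by auto
  then show "mpow P (Suc 0) i k = P i k"
    by (simp add: infsum_single_point)
qed

declare mpow.simps(2) [simp del]

lemma mpow_add_ge:
  assumes P: "stochastic P"
  shows "mpow P n i j * mpow P m j k \<le> mpow P (n + m) i k"
proof (induction m arbitrary: k)
  case 0
  then show ?case using mpow_nonneg[OF P] mpow_le_1[OF P] by auto
next
  case (Suc m)
  have row: "(\<lambda>l. mpow P r x l) summable_on UNIV" for r x
    by (rule has_sum_imp_summable[OF mpow_row_has_sum[OF P]])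
  have weighted: "(\<lambda>l. mpow P r x l * P l k) summable_on UNIV" for r x
    by (rule summable_on_mult_unit_interval[OF row])
       (use mpow_nonneg[OF P] stochastic_nonneg[OF P] stochastic_le_1[OF P] in auto)
  have "mpow P n i j * mpow P (Suc m) j k = (\<Sum>\<^sub>\<infinity>l. mpow P n i j * (mpow P m j l * P l k))"
    by (simp add: infsum_cmult_right' mpow.simps(2))
  also have "\<dots> \<le> (\<Sum>\<^sub>\<infinity>l. mpow P (n + m) i l * P l k)"
  proof (rule infsum_mono[OF summable_on_cmult_right[OF weighted] weighted])
    show "mpow P n i j * (mpow P m j l * P l k) \<le> mpow P (n + m) i l * P l k" for l
      using Suc.IH[of l] stochastic_nonneg[OF P] by (simp add: mult.assoc[symmetric] mult_right_mono)
  qed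
  also have "\<dots> = mpow P (n + Suc m) i k"
    by (simp add: mpow.simps(2))
  finally show ?case .
qed

lemma mpow_add_pos:
  assumes "stochastic P" "0 < mpow P n i j" "0 < mpow P m j k"
  shows "0 < mpow P (n + m) i k"
  using mpow_add_ge[OF assms(1), of n i j m k] mult_pos_pos[OF assms(2,3)] by linarith

lemma mpow_relabel:
  assumes "bij s"
  shows "mpow (\<lambda>x y. Q (s x) (s y)) n x y = mpow Q n (s x) (s y)"
proof (induction n arbitrary: y)
  case 0
  then show ?case using bij_is_inj[OF assms] by (auto dest: injD)
next
  case (Suc n)
  have "mpow (\<lambda>x y. Q (s x) (s y)) (Suc n) x y = (\<Sum>\<^sub>\<infinity>j. mpow Q n (s x) (s j) * Q (s j) (s y))"
    by (simp add: Suc.IH mpow.simps(2))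
  also have "\<dots> = (\<Sum>\<^sub>\<infinity>j. mpow Q n (s x) j * Q j (s y))"
    using infsum_reindex_bij_betw[of s UNIV UNIV "\<lambda>j. mpow Q n (s x) j * Q j (s y)"] assms
    by (simp add: bij_betw_def)
  finally show ?case by (simp add: mpow.simps(2))
qed

lemma stochastic_relabel:
  assumes "bij s" "stochastic Q"
  shows "stochastic (\<lambda>x y. Q (s x) (s y))"
  unfolding stochastic_def
proof (intro conjI allI)
  show "0 \<le> Q (s i) (s j)" for i j
    by (rule stochastic_nonneg[OF assms(2)])
  show "((\<lambda>j. Q (s i) (s j)) has_sum 1) UNIV" for i
    using has_sum_reindex_bij_betw[of s UNIV UNIV "\<lambda>j. Q (s i) j"] assms
      stochastic_row_has_sum[OF assms(2)] by (simp add: bij_betw_def)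
qed

lemma recurrent_relabel:
  assumes "bij s" "recurrent Q"
  shows "recurrent (\<lambda>x y. Q (s x) (s y))"
  using assms unfolding recurrent_def by (simp add: mpow_relabel)

section \<open>Chains with multiplicative ratios\<close>

locale cocycle_equivalent =
  fixes P Q :: "'a \<Rightarrow> 'a \<Rightarrow> real"
  assumes stochastic_P: "stochastic P" and stochastic_Q: "stochastic Q"
    and recurrent_P: "recurrent P" and recurrent_Q: "recurrent Q"
    and mpow_pos_iff: "n \<ge> 1 \<Longrightarrow> 0 < mpow P n x y \<longleftrightarrow> 0 < mpow Q n x y"
    and mpow_cocycle: "\<lbrakk>n \<ge> 1; m \<ge> 1; 0 < mpow P n x y; 0 < mpow P m y z\<rbrakk> \<Longrightarrow>
      mpow P n x y * mpow P m y z * mpow Q (n + m) x z = mpow Q n x y * mpow Q m y z * mpow P (n + m) x z"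
begin

definition ratio :: "nat \<Rightarrow> 'a \<Rightarrow> 'a \<Rightarrow> real" where
  "ratio n x y = mpow Q n x y / mpow P n x y"

lemma ratio_nonneg: "0 \<le> ratio n x y"
  unfolding ratio_def
  using mpow_nonneg[OF stochastic_P, of n x y] mpow_nonneg[OF stochastic_Q, of n x y] by simp

lemma ratio_pos: "n \<ge> 1 \<Longrightarrow> 0 < mpow P n x y \<Longrightarrow> 0 < ratio n x y"
  unfolding ratio_def using mpow_pos_iff by simp

lemma mpow_Q_eq: "n \<ge> 1 \<Longrightarrow> mpow Q n x y = mpow P n x y * ratio n x y"
  unfolding ratio_def using mpow_pos_iff[of n x y] mpow_nonneg[OF stochastic_P, of n x y]
    mpow_nonneg[OF stochastic_Q, of n x y] by (cases "mpow P n x y = 0") auto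

lemma Q_eq: "Q x y = P x y * ratio 1 x y"
  using mpow_Q_eq[of 1 x y] by simp

lemma ratio_add:
  assumes "n \<ge> 1" "m \<ge> 1" "0 < mpow P n x y" "0 < mpow P m y z"
  shows "ratio (n + m) x z = ratio n x y * ratio m y z"
  using mpow_cocycle[OF assms] mpow_add_pos[OF stochastic_P assms(3,4)] assms(3,4)
  unfolding ratio_def by (simp add: field_simps)

lemma ratio_diag_power:
  assumes "s \<ge> 1" "0 < mpow P s i i" "k \<ge> 1"
  shows "0 < mpow P (k * s) i i \<and> ratio (k * s) i i = ratio s i i ^ k"
  using assms(3)
proof (induction k rule: dec_induct)
  case base
  then show ?case using assms(2) by simp
next
  case (step k)
  have ks: "k * s \<ge> 1" using step.hyps(1) assms(1) by simp
  have pos: "0 < mpow P (k * s) i i" using step.IH by blast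
  have "0 < mpow P (k * s + s) i i"
    by (rule mpow_add_pos[OF stochastic_P pos assms(2)])
  moreover have "ratio (k * s + s) i i = ratio (k * s) i i * ratio s i i"
    by (rule ratio_add[OF ks assms(1) pos assms(2)])
  ultimately show ?case
    using step.IH by (simp add: add.commute mult.commute)
qed

lemma ratio_diag_geometric:
  assumes "s \<ge> 1" "0 < mpow P s i i"
  obtains c where "0 < c" "\<And>u. u \<ge> 1 \<Longrightarrow> 0 < mpow P u i i \<Longrightarrow> ratio u i i = c ^ u"
proof
  define c where "c = root s (ratio s i i)"
  have rs: "0 < ratio s i i" by (rule ratio_pos[OF assms])
  then show "0 < c" using assms(1) by (simp add: c_def)
  have cs: "c ^ s = ratio s i i" using rs assms(1) by (simp add: c_def)
  fix u assume u: "u \<ge> 1" "0 < mpow P u i i"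
  have "ratio u i i ^ s = ratio (s * u) i i"
    using ratio_diag_power[OF u assms(1)] by simp
  also have "\<dots> = ratio s i i ^ u"
    using ratio_diag_power[OF assms u(1)] by (simp add: mult.commute)
  also have "\<dots> = (c ^ u) ^ s"
    by (simp add: cs[symmetric] power_mult[symmetric] mult.commute)
  finally show "ratio u i i = c ^ u"
    using power_eq_imp_eq_base[of "ratio u i i" s "c ^ u"] ratio_pos[OF u] \<open>0 < c\<close> assms(1) by simp
qed

lemma ratio_diag:
  assumes "n \<ge> 1" "0 < mpow P n i i"
  shows "ratio n i i = 1"
proof -
  obtain c where c: "0 < c" "\<And>u. u \<ge> 1 \<Longrightarrow> 0 < mpow P u i i \<Longrightarrow> ratio u i i = c ^ u"
    using ratio_diag_geometric[OF assms] by blast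
  note P_bound = mpow_le_1[OF stochastic_P, of "Suc u" i i for u]
    and Q_bound = mpow_le_1[OF stochastic_Q, of "Suc u" i i for u]
    and P_nonneg = mpow_nonneg[OF stochastic_P, of "Suc u" i i for u]
    and Q_nonneg = mpow_nonneg[OF stochastic_Q, of "Suc u" i i for u]
  have "\<not> c < 1"
  proof
    assume "c < 1"
    have "mpow Q (Suc u) i i \<le> c ^ Suc u" for u
      using P_bound[of u] P_nonneg[of u] Q_nonneg[of u] mpow_Q_eq[of "Suc u" i i] c
        mpow_pos_iff[of "Suc u" i i] mult_left_le[of "mpow P (Suc u) i i" "c ^ Suc u"]
      by (cases "0 < mpow P (Suc u) i i") auto
    then have "summable (\<lambda>u. mpow Q (Suc u) i i)"
      using \<open>c < 1\<close> c(1) Q_nonneg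
      by (intro summable_Suc_geometric_dominated[where f = "\<lambda>u. mpow Q u i i" and c = c]) auto
    then show False
      using recurrent_Q unfolding recurrent_def by blast
  qed
  moreover have "\<not> c > 1"
  proof
    assume "c > 1"
    have "mpow P (Suc u) i i \<le> (1 / c) ^ Suc u" for u
    proof (cases "0 < mpow P (Suc u) i i")
      case True
      then have "mpow P (Suc u) i i * c ^ Suc u = mpow Q (Suc u) i i"
        using mpow_Q_eq[of "Suc u" i i] c by simp
      then show ?thesis
        using Q_bound[of u] c(1) by (simp add: field_simps power_one_over)
    qed (use P_nonneg[of u] c(1) in auto)
    then have "summable (\<lambda>u. mpow P (Suc u) i i)"
      using \<open>c > 1\<close> P_nonneg
      by (intro summable_Suc_geometric_dominated[where f = "\<lambda>u. mpow P u i i" and c = "1 / c"]) auto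
    then show False
      using recurrent_P unfolding recurrent_def by blast
  qed
  ultimately show ?thesis
    using c(2)[OF assms] by simp
qed

text \<open>Since \<open>P\<^sup>t\<^sub>i\<^sub>j \<cdot> min (ratio t i j) 1 = min P\<^sup>t\<^sub>i\<^sub>j Q\<^sup>t\<^sub>i\<^sub>j\<close>, \<open>lyapunov i t\<close> is the common mass
  of the \<open>i\<close>-th rows of \<open>P\<^sup>t\<close> and \<open>Q\<^sup>t\<close>, and \<open>defect i\<close> is the total variation distance
  between the \<open>i\<close>-th rows of \<open>P\<close> and \<open>Q\<close>.\<close>
definition lyapunov :: "'a \<Rightarrow> nat \<Rightarrow> real" where
  "lyapunov i t = (\<Sum>\<^sub>\<infinity>j. mpow P t i j * min (ratio t i j) 1)"

definition defect :: "'a \<Rightarrow> real" where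
  "defect i = 1 - (\<Sum>\<^sub>\<infinity>k. P i k * min (ratio 1 i k) 1)"

lemma min_ratio_unit_interval: "0 \<le> min (ratio t i j) 1" "min (ratio t i j) 1 \<le> 1"
  using ratio_nonneg by auto

lemma row_min_ratio_le:
  assumes "t \<ge> 1" "0 < mpow P t i j"
  shows "(\<Sum>\<^sub>\<infinity>k. P j k * min (ratio (Suc t) i k) 1) \<le> min (ratio t i j) 1"
proof -
  note row = stochastic_row_mult_unit_interval[OF stochastic_P min_ratio_unit_interval]
  have "(\<Sum>\<^sub>\<infinity>k. P j k * min (ratio (Suc t) i k) 1) \<le> (\<Sum>\<^sub>\<infinity>k. ratio t i j * Q j k)"
  proof (rule infsum_mono[OF row(1)])
    show "(\<lambda>k. ratio t i j * Q j k) summable_on UNIV"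
      by (rule summable_on_cmult_right[OF has_sum_imp_summable[OF stochastic_row_has_sum[OF stochastic_Q]]])
    show "P j k * min (ratio (Suc t) i k) 1 \<le> ratio t i j * Q j k" for k
    proof (cases "0 < P j k")
      case True
      then have "ratio (Suc t) i k = ratio t i j * ratio 1 j k"
        using ratio_add[OF assms(1) _ assms(2), of 1 k] by simp
      then have "P j k * min (ratio (Suc t) i k) 1 \<le> P j k * (ratio t i j * ratio 1 j k)"
        using True by (intro mult_left_mono) auto
      then show ?thesis
        using Q_eq[of j k] by (simp add: algebra_simps)
    next
      case False
      then show ?thesis
        using stochastic_nonneg[OF stochastic_P, of j k] stochastic_nonneg[OF stochastic_Q, of j k]
          ratio_nonneg[of t i j] by simp
    qed
  qed
  also have "\<dots> = ratio t i j"
    using infsumI[OF stochastic_row_has_sum[OF stochastic_Q]] by (simp add: infsum_cmult_right')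
  finally show ?thesis
    using row(3) by simp
qed

lemma row_min_ratio_diag:
  assumes "t \<ge> 1" "0 < mpow P t i i"
  shows "(\<Sum>\<^sub>\<infinity>k. P i k * min (ratio (Suc t) i k) 1) = 1 - defect i"
proof -
  have "P i k * min (ratio (Suc t) i k) 1 = P i k * min (ratio 1 i k) 1" for k
  proof (cases "0 < P i k")
    case True
    then show ?thesis
      using ratio_add[OF assms(1) _ assms(2), of 1 k] ratio_diag[OF assms] by simp
  qed (use stochastic_nonneg[OF stochastic_P, of i k] in simp)
  then have "(\<lambda>k. P i k * min (ratio (Suc t) i k) 1) = (\<lambda>k. P i k * min (ratio 1 i k) 1)"
    by (rule ext)
  then show ?thesis
    unfolding defect_def by simp
qed

lemma lyapunov_step_term:
  assumes "t \<ge> 1"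
  shows "mpow P t i j * (\<Sum>\<^sub>\<infinity>k. P j k * min (ratio (Suc t) i k) 1)
      + (if j = i then mpow P t i i * defect i else 0) \<le> mpow P t i j * min (ratio t i j) 1"
proof (cases "0 < mpow P t i j")
  case True
  show ?thesis
  proof (cases "j = i")
    case True
    with \<open>0 < mpow P t i j\<close> have "0 < mpow P t i i" by simp
    from row_min_ratio_diag[OF assms this] ratio_diag[OF assms this] True show ?thesis
      by (simp add: right_diff_distrib)
  next
    case False
    then show ?thesis
      using row_min_ratio_le[OF assms True] True by (simp add: mult_left_mono)
  qed
next
  case False
  then show ?thesis
    using mpow_nonneg[OF stochastic_P, of t i j] by auto
qed

lemma lyapunov_step:
  assumes "t \<ge> 1"
  shows "lyapunov i (Suc t) + mpow P t i i * defect i \<le> lyapunov i t"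
proof -
  define row where "row j = (\<Sum>\<^sub>\<infinity>k. P j k * min (ratio (Suc t) i k) 1)" for j
  define peak where "peak j = (if j = i then mpow P t i i * defect i else 0)" for j
  note mpow_row = has_sum_imp_summable[OF mpow_row_has_sum[OF stochastic_P]]
  note assoc = stochastic_infsum_assoc[OF stochastic_P mpow_row mpow_nonneg[OF stochastic_P]
      min_ratio_unit_interval]
  have rows: "(\<lambda>j. mpow P t i j * row j) summable_on UNIV"
    unfolding row_def
    by (rule summable_on_mult_unit_interval[OF mpow_row])
       (use mpow_nonneg[OF stochastic_P]
          stochastic_row_mult_unit_interval[OF stochastic_P min_ratio_unit_interval] in auto)
  have peak: "(peak has_sum mpow P t i i * defect i) UNIV"
    unfolding peak_def by (rule has_sum_single_point)
  have "lyapunov i (Suc t) + mpow P t i i * defect i = (\<Sum>\<^sub>\<infinity>j. mpow P t i j * row j) + infsum peak UNIV"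
    unfolding lyapunov_def row_def using assoc(2) infsumI[OF peak] by (simp add: mpow.simps(2))
  also have "\<dots> = (\<Sum>\<^sub>\<infinity>j. mpow P t i j * row j + peak j)"
    by (rule infsum_add[OF rows has_sum_imp_summable[OF peak], symmetric])
  also have "\<dots> \<le> lyapunov i t"
    unfolding lyapunov_def
  proof (rule infsum_mono[OF summable_on_add[OF rows has_sum_imp_summable[OF peak]]])
    show "(\<lambda>j. mpow P t i j * min (ratio t i j) 1) summable_on UNIV"
      by (rule summable_on_mult_unit_interval[OF mpow_row])
         (use mpow_nonneg[OF stochastic_P] min_ratio_unit_interval in auto)
    show "mpow P t i j * row j + peak j \<le> mpow P t i j * min (ratio t i j) 1" for j
      unfolding row_def peak_def by (rule lyapunov_step_term[OF assms])
  qed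
  finally show ?thesis .
qed

lemma lyapunov_nonneg: "0 \<le> lyapunov i t"
  unfolding lyapunov_def
  by (rule infsum_nonneg) (use mpow_nonneg[OF stochastic_P] min_ratio_unit_interval in auto)

lemma lyapunov_le_1: "lyapunov i t \<le> 1"
proof -
  note mpow_row = mpow_row_has_sum[OF stochastic_P]
  have "lyapunov i t \<le> (\<Sum>\<^sub>\<infinity>j. mpow P t i j)"
    unfolding lyapunov_def
    by (rule infsum_mult_unit_interval_le[OF has_sum_imp_summable[OF mpow_row]])
       (use mpow_nonneg[OF stochastic_P] min_ratio_unit_interval in auto)
  then show ?thesis
    using infsumI[OF mpow_row] by simp
qed

lemma defect_nonneg: "0 \<le> defect i"
  unfolding defect_def
  using stochastic_row_mult_unit_interval(3)[OF stochastic_P min_ratio_unit_interval] by simp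

lemma lyapunov_telescope:
  "lyapunov i (Suc N) + defect i * (\<Sum>n<N. mpow P (Suc n) i i) \<le> lyapunov i 1"
proof (induction N)
  case (Suc N)
  have "lyapunov i (Suc (Suc N)) + mpow P (Suc N) i i * defect i \<le> lyapunov i (Suc N)"
    by (rule lyapunov_step) simp
  then show ?case
    using Suc.IH by (simp add: algebra_simps)
qed simp

lemma defect_eq_0: "defect i = 0"
proof (rule ccontr)
  assume "defect i \<noteq> 0"
  then have pos: "0 < defect i"
    using defect_nonneg[of i] by simp
  have "summable (\<lambda>n. mpow P (Suc n) i i)"
  proof (rule summableI_nonneg_bounded[where x = "1 / defect i"])
    show "0 \<le> mpow P (Suc n) i i" for n
      by (rule mpow_nonneg[OF stochastic_P])
    have "defect i * (\<Sum>n<N. mpow P (Suc n) i i) \<le> 1" for N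
      using lyapunov_telescope[of i N] lyapunov_nonneg[of i "Suc N"] lyapunov_le_1[of i 1] by simp
    then show "(\<Sum>n<N. mpow P (Suc n) i i) \<le> 1 / defect i" for N
      using pos by (simp add: field_simps)
  qed
  then show False
    using recurrent_P unfolding recurrent_def by blast
qed

lemma P_le_Q: "P i k \<le> Q i k"
proof (cases "0 < P i k")
  case True
  note row = stochastic_row_mult_unit_interval[OF stochastic_P min_ratio_unit_interval]
  have "((\<lambda>k. P i k - P i k * min (ratio 1 i k) 1) has_sum defect i) UNIV"
    using has_sum_diff[OF stochastic_row_has_sum[OF stochastic_P] has_sum_infsum[OF row(1)]]
    by (simp add: defect_def)
  then have "P i k - P i k * min (ratio 1 i k) 1 = 0"
    by (rule nonneg_has_sum_le_0D)
       (use defect_eq_0 stochastic_nonneg[OF stochastic_P] min_ratio_unit_interval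
         in \<open>auto intro: mult_left_le\<close>)
  then have "1 \<le> ratio 1 i k"
    using True by (simp add: min_def split: if_splits)
  then show ?thesis
    using Q_eq[of i k] True mult_left_mono[of 1 "ratio 1 i k" "P i k"] by simp
qed (use stochastic_nonneg[OF stochastic_P, of i k] stochastic_nonneg[OF stochastic_Q, of i k] in simp)

theorem P_eq_Q: "P = Q"
proof (intro ext)
  fix i k
  have "((\<lambda>k. Q i k - P i k) has_sum (1 - 1)) UNIV"
    by (rule has_sum_diff[OF stochastic_row_has_sum[OF stochastic_Q] stochastic_row_has_sum[OF stochastic_P]])
  then have "Q i k - P i k = 0"
    by (rule nonneg_has_sum_le_0D) (use P_le_Q in auto)
  then show "P i k = Q i k"
    by simp
qed

end

section \<open>Star automorphisms of \<open>\<ell>\<^sup>\<infinity>\<close>\<close>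

abbreviation delta :: "'a \<Rightarrow> 'a \<Rightarrow> complex" where
  "delta j \<equiv> indicator {j}"

lemma delta_in_linf: "delta j \<in> linf"
  unfolding linf_def by (intro CollectI exI[of _ 1]) (simp add: indicator_def)

lemma mult_in_linf:
  assumes "f \<in> linf" "g \<in> linf"
  shows "(\<lambda>x. f x * g x) \<in> linf"
proof -
  obtain C D where "\<And>x. cmod (f x) \<le> C" "\<And>x. cmod (g x) \<le> D"
    using assms unfolding linf_def by blast
  then have "cmod (f x * g x) \<le> C * D" for x
    unfolding norm_mult by (meson mult_mono norm_ge_zero order_trans)
  then show ?thesis
    unfolding linf_def by blast
qed

lemma delta_inject [simp]: "delta a = delta b \<longleftrightarrow> a = b"
proof
  assume "delta a = delta b"
  from fun_cong[OF this, of a] show "a = b"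
    by (simp add: indicator_def split: if_splits)
qed simp

lemma delta_neq_0: "delta j \<noteq> (\<lambda>_. 0)"
  by (auto simp: fun_eq_iff indicator_def)

lemma delta_mult_eq_delta_iff: "(\<lambda>y. delta x y * g y) = delta x \<longleftrightarrow> g x = 1"
  by (auto simp: fun_eq_iff indicator_def)

lemma idempotent_has_one:
  fixes f :: "'a \<Rightarrow> complex"
  assumes "(\<lambda>x. f x * f x) = f" "f \<noteq> (\<lambda>_. 0)"
  obtains x where "f x = 1"
proof -
  obtain x where "f x \<noteq> 0"
    using assms(2) by blast
  moreover have "f x * (f x - 1) = 0"
    using fun_cong[OF assms(1), of x] by (simp add: algebra_simps)
  ultimately show ?thesis
    using that by simp
qed

context
  fixes \<rho> :: "('a \<Rightarrow> complex) \<Rightarrow> ('a \<Rightarrow> complex)"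
  assumes \<rho>: "star_automorphism \<rho>"
begin

lemma star_automorphism_mult:
  "f \<in> linf \<Longrightarrow> g \<in> linf \<Longrightarrow> \<rho> (\<lambda>x. f x * g x) = (\<lambda>x. \<rho> f x * \<rho> g x)"
  using \<rho> unfolding star_automorphism_def by blast

lemma star_automorphism_scale: "f \<in> linf \<Longrightarrow> \<rho> (\<lambda>x. c * f x) = (\<lambda>x. c * \<rho> f x)"
  using \<rho> unfolding star_automorphism_def by blast

lemma star_automorphism_inject: "f \<in> linf \<Longrightarrow> g \<in> linf \<Longrightarrow> \<rho> f = \<rho> g \<longleftrightarrow> f = g"
  using \<rho> unfolding star_automorphism_def bij_betw_def inj_on_def by blast

lemma star_automorphism_surj:
  assumes "g \<in> linf"
  obtains f where "f \<in> linf" "\<rho> f = g"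
  using \<rho> assms unfolding star_automorphism_def bij_betw_def by (metis imageE)

lemma star_automorphism_eq_0_iff:
  assumes "f \<in> linf"
  shows "\<rho> f = (\<lambda>_. 0) \<longleftrightarrow> f = (\<lambda>_. 0)"
proof -
  have "(\<lambda>_. 0) \<in> linf"
    unfolding linf_def by auto
  then have "\<rho> (\<lambda>_. 0) = (\<lambda>_. 0)"
    using star_automorphism_scale[of "\<lambda>_. 0" 0] by simp
  then show ?thesis
    using star_automorphism_inject[OF assms \<open>(\<lambda>_. 0) \<in> linf\<close>] by simp
qed

lemma star_automorphism_idempotent_iff:
  assumes "f \<in> linf"
  shows "(\<lambda>x. \<rho> f x * \<rho> f x) = \<rho> f \<longleftrightarrow> (\<lambda>x. f x * f x) = f"
  using star_automorphism_inject[OF mult_in_linf[OF assms assms] assms]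
    star_automorphism_mult[OF assms assms] by simp

text \<open>The nonzero projection \<open>\<rho> (delta j)\<close> takes the value \<open>1\<close> at some \<open>x\<close>, and pulling
  \<open>delta x\<close> back under \<open>\<rho>\<close> gives a multiple of \<open>delta j\<close>.\<close>
lemma star_automorphism_delta: "\<exists>x. \<rho> (delta j) = delta x"
proof -
  define f where "f = \<rho> (delta j)"
  have "(\<lambda>x. f x * f x) = f"
    unfolding f_def by (subst star_automorphism_idempotent_iff) (auto simp: delta_in_linf indicator_def)
  moreover have "f \<noteq> (\<lambda>_. 0)"
    unfolding f_def using star_automorphism_eq_0_iff[OF delta_in_linf] delta_neq_0 by simp
  ultimately obtain x where fx: "f x = 1"
    by (rule idempotent_has_one)
  obtain h where h: "h \<in> linf" "\<rho> h = delta x"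
    using star_automorphism_surj[OF delta_in_linf] by blast
  have "\<rho> (\<lambda>y. h y * delta j y) = (\<lambda>y. delta x y * f y)"
    using star_automorphism_mult[OF h(1) delta_in_linf] h(2) f_def by simp
  also have "\<dots> = \<rho> h"
    using delta_mult_eq_delta_iff[of x f, THEN iffD2, OF fx] h(2) by simp
  finally have "(\<lambda>y. h y * delta j y) = h"
    using star_automorphism_inject[OF mult_in_linf[OF h(1) delta_in_linf] h(1)] by simp
  then have "h = (\<lambda>y. h j * delta j y)"
    by (auto simp: fun_eq_iff indicator_def)
  then have "delta x = (\<lambda>y. h j * f y)"
    unfolding f_def h(2)[symmetric] by (metis star_automorphism_scale[OF delta_in_linf])
  moreover from fun_cong[OF this, of x] have "h j = 1"
    using fx by simp
  ultimately have "\<rho> (delta j) = delta x"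
    unfolding f_def by simp
  then show ?thesis ..
qed

lemma star_automorphism_delta_sigma: "\<rho> (delta j) = delta (sigma_of \<rho> j)"
proof -
  obtain x where x: "\<rho> (delta j) = delta x"
    using star_automorphism_delta by blast
  then have "sigma_of \<rho> j = x"
    unfolding sigma_of_def by (rule the_equality) (simp add: x)
  then show ?thesis
    using x by simp
qed

lemma inj_sigma_of: "inj (sigma_of \<rho>)"
proof (rule injI)
  fix a b
  assume "sigma_of \<rho> a = sigma_of \<rho> b"
  then have "\<rho> (delta a) = \<rho> (delta b)"
    by (simp add: star_automorphism_delta_sigma)
  then show "a = b"
    by (simp add: star_automorphism_inject delta_in_linf)
qed

lemma surj_sigma_of: "surj (sigma_of \<rho>)"
  unfolding surj_def
proof
  fix y
  obtain h where h: "h \<in> linf" "\<rho> h = delta y"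
    using star_automorphism_surj[OF delta_in_linf] by blast
  have "(\<lambda>x. h x * h x) = h"
    using h star_automorphism_idempotent_iff[OF h(1)] by (auto simp: fun_eq_iff indicator_def)
  moreover have "h \<noteq> (\<lambda>_. 0)"
  proof
    assume "h = (\<lambda>_. 0)"
    then have "delta y = (\<lambda>_. 0)"
      using h star_automorphism_eq_0_iff[OF h(1)] by simp
    with delta_neq_0[of y] show False
      by contradiction
  qed
  ultimately obtain j where "h j = 1"
    by (rule idempotent_has_one)
  then have "(\<lambda>x. delta j x * h x) = delta j"
    by (rule delta_mult_eq_delta_iff[THEN iffD2])
  from arg_cong[where f = \<rho>, OF this]
  have "(\<lambda>x. delta (sigma_of \<rho> j) x * delta y x) = delta (sigma_of \<rho> j)"
    by (simp add: star_automorphism_mult[OF delta_in_linf h(1)] h(2) star_automorphism_delta_sigma)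
  then have "delta y (sigma_of \<rho> j) = 1"
    by (rule delta_mult_eq_delta_iff[THEN iffD1])
  then show "\<exists>j. y = sigma_of \<rho> j"
    by (auto simp: indicator_def split: if_splits)
qed

end

section \<open>Matrix units in \<open>Arv(P)\<close>\<close>

definition matrix_unit :: "'a \<Rightarrow> 'a \<Rightarrow> complex \<Rightarrow> 'a \<Rightarrow> 'a \<Rightarrow> complex" where
  "matrix_unit i j c = (\<lambda>a b. if a = i \<and> b = j then c else 0)"

lemma matrix_unit_in_arv:
  assumes "mpow R n i j \<noteq> 0"
  shows "matrix_unit i j c \<in> arv R n"
proof -
  have col: "(\<lambda>a. (cmod (matrix_unit i j c a b))\<^sup>2) = (\<lambda>a. if a = i then (if b = j then (cmod c)\<^sup>2 else 0) else 0)" for b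
    by (auto simp: matrix_unit_def)
  show ?thesis
    unfolding arv_def
  proof (intro CollectI conjI allI impI exI)
    show "matrix_unit i j c a b = 0" if "mpow R n a b = 0" for a b
      using that assms by (auto simp: matrix_unit_def)
    show "(\<lambda>a. (cmod (matrix_unit i j c a b))\<^sup>2) summable_on UNIV" for b
      unfolding col by (rule has_sum_imp_summable[OF has_sum_single_point])
    show "(\<Sum>\<^sub>\<infinity>a. (cmod (matrix_unit i j c a b))\<^sup>2) \<le> (cmod c)\<^sup>2" for b
      unfolding col infsum_single_point by simp
  qed
qed

lemma matrix_unit_scale: "matrix_unit i j (c * d) = (\<lambda>a b. c * matrix_unit i j d a b)"
  by (auto simp: matrix_unit_def fun_eq_iff)

lemma arv_act_delta: "arv_act (delta x) A (delta y) = matrix_unit x y (A x y)"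
  by (auto simp: arv_act_def matrix_unit_def indicator_def fun_eq_iff)

lemma arv_inner_matrix_unit:
  "arv_inner (matrix_unit i j c) (matrix_unit i j c) = (\<lambda>b. if b = j then cnj c * c else 0)"
proof
  fix b
  have "(\<lambda>a. cnj (matrix_unit i j c a b) * matrix_unit i j c a b)
      = (\<lambda>a. if a = i then (if b = j then cnj c * c else 0) else 0)"
    by (auto simp: matrix_unit_def)
  then show "arv_inner (matrix_unit i j c) (matrix_unit i j c) b = (if b = j then cnj c * c else 0)"
    unfolding arv_inner_def by (simp add: infsum_single_point)
qed

text \<open>The scalar by which \<open>U\<^sub>n\<^sub>,\<^sub>m\<close> multiplies a product of matrix units through \<open>i \<rightarrow> j \<rightarrow> k\<close>.\<close>
definition path_weight :: "('a \<Rightarrow> 'a \<Rightarrow> real) \<Rightarrow> nat \<Rightarrow> nat \<Rightarrow> 'a \<Rightarrow> 'a \<Rightarrow> 'a \<Rightarrow> real" where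
  "path_weight R n m i j k = flat (sqrt (mpow R (n + m) i k)) * (sqrt (mpow R n i j) * sqrt (mpow R m j k))"

lemma arvU_matrix_unit:
  "arvU R n m (matrix_unit i j c) (matrix_unit j k d)
    = matrix_unit i k (complex_of_real (path_weight R n m i j k) * (c * d))"
proof (intro ext)
  fix a b
  let ?s = "\<lambda>r x y. complex_of_real (sqrt (mpow R r x y))"
  have "(\<lambda>l. (?s n a l * matrix_unit i j c a l) * (?s m l b * matrix_unit j k d l b))
     = (\<lambda>l. if l = j then (if a = i \<and> b = k then (?s n i j * c) * (?s m j k * d) else 0) else 0)"
    by (auto simp: matrix_unit_def)
  then show "arvU R n m (matrix_unit i j c) (matrix_unit j k d) a b
      = matrix_unit i k (complex_of_real (path_weight R n m i j k) * (c * d)) a b"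
    unfolding arvU_def path_weight_def by (simp add: infsum_single_point) (auto simp: matrix_unit_def)
qed

lemma path_weight_nonneg: "stochastic R \<Longrightarrow> 0 \<le> path_weight R n m i j k"
  unfolding path_weight_def flat_def by (simp add: mpow_nonneg)

lemma path_weight_eq_imp:
  assumes "path_weight P n m i j k = path_weight Q n m i j k"
    and "0 < mpow P n i j" "0 < mpow P m j k" "0 < mpow P (n + m) i k"
    and "0 \<le> mpow Q n i j" "0 \<le> mpow Q m j k" "0 \<le> mpow Q (n + m) i k"
  shows "mpow P n i j * mpow P m j k * mpow Q (n + m) i k = mpow Q n i j * mpow Q m j k * mpow P (n + m) i k"
proof -
  have square: "(path_weight R n m i j k)\<^sup>2 = mpow R n i j * mpow R m j k / mpow R (n + m) i k"
    if "0 \<le> mpow R n i j" "0 \<le> mpow R m j k" "0 \<le> mpow R (n + m) i k" for R :: "'a \<Rightarrow> 'a \<Rightarrow> real"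
    using that unfolding path_weight_def flat_def
    by (auto simp: power_mult_distrib power_inverse field_simps)
  have "0 < path_weight P n m i j k"
    using assms(2-4) unfolding path_weight_def flat_def by simp
  then have "0 < mpow Q (n + m) i k"
    using assms(1,7) unfolding path_weight_def flat_def by (auto split: if_splits)
  then show ?thesis
    using arg_cong[OF assms(1), of power2] square[of P] square[of Q] assms(2-7)
    by (simp add: field_simps)
qed

section \<open>\<open>\<rho>\<close>-unitary isomorphisms\<close>

locale rho_unitary =
  fixes P Q :: "'a \<Rightarrow> 'a \<Rightarrow> real"
    and \<rho> :: "('a \<Rightarrow> complex) \<Rightarrow> ('a \<Rightarrow> complex)"
    and V :: "nat \<Rightarrow> ('a \<Rightarrow> 'a \<Rightarrow> complex) \<Rightarrow> ('a \<Rightarrow> 'a \<Rightarrow> complex)"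
  assumes stochastic_P: "stochastic P" and stochastic_Q: "stochastic Q"
    and star_automorphism: "star_automorphism \<rho>"
    and iso: "rho_unitary_iso P Q \<rho> V"
begin

abbreviation \<sigma> :: "'a \<Rightarrow> 'a" where
  "\<sigma> \<equiv> sigma_of \<rho>"

lemma bij_sigma: "bij \<sigma>"
  by (rule bijI[OF inj_sigma_of[OF star_automorphism] surj_sigma_of[OF star_automorphism]])

lemma V_image: "n \<ge> 1 \<Longrightarrow> V n ` arv P n = arv Q n"
  and V_scale: "n \<ge> 1 \<Longrightarrow> A \<in> arv P n \<Longrightarrow> V n (\<lambda>i j. c * A i j) = (\<lambda>i j. c * V n A i j)"
  and V_act: "n \<ge> 1 \<Longrightarrow> A \<in> arv P n \<Longrightarrow> a \<in> linf \<Longrightarrow> b \<in> linf \<Longrightarrow>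
      V n (arv_act a A b) = arv_act (\<rho> a) (V n A) (\<rho> b)"
  and V_inner: "n \<ge> 1 \<Longrightarrow> A \<in> arv P n \<Longrightarrow> B \<in> arv P n \<Longrightarrow>
      arv_inner (V n A) (V n B) = \<rho> (arv_inner A B)"
  and V_arvU: "n \<ge> 1 \<Longrightarrow> m \<ge> 1 \<Longrightarrow> A \<in> arv P n \<Longrightarrow> B \<in> arv P m \<Longrightarrow>
      V (n + m) (arvU P n m A B) = arvU Q n m (V n A) (V m B)"
  using iso unfolding rho_unitary_iso_def by blast+

lemma V_delta_act:
  assumes "n \<ge> 1" "A \<in> arv P n"
  shows "V n (arv_act (delta i) A (delta j)) = arv_act (delta (\<sigma> i)) (V n A) (delta (\<sigma> j))"
  using V_act[OF assms delta_in_linf delta_in_linf]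
  unfolding star_automorphism_delta_sigma[OF star_automorphism] .

lemma V_matrix_unit:
  assumes "n \<ge> 1" "0 < mpow P n i j"
  obtains c where "cmod c = 1" "V n (matrix_unit i j 1) = matrix_unit (\<sigma> i) (\<sigma> j) c"
proof -
  have E: "matrix_unit i j 1 \<in> arv P n"
    by (rule matrix_unit_in_arv) (use assms(2) in simp)
  define c where "c = V n (matrix_unit i j 1) (\<sigma> i) (\<sigma> j)"
  have "V n (matrix_unit i j 1) = V n (arv_act (delta i) (matrix_unit i j 1) (delta j))"
    by (simp add: arv_act_delta matrix_unit_def)
  also have "\<dots> = matrix_unit (\<sigma> i) (\<sigma> j) c"
    unfolding c_def V_delta_act[OF assms(1) E] by (rule arv_act_delta)
  finally have VE: "V n (matrix_unit i j 1) = matrix_unit (\<sigma> i) (\<sigma> j) c" .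
  have "arv_inner (matrix_unit (\<sigma> i) (\<sigma> j) c) (matrix_unit (\<sigma> i) (\<sigma> j) c) = \<rho> (delta j)"
    unfolding VE[symmetric] V_inner[OF assms(1) E E] arv_inner_matrix_unit
    by (rule arg_cong[where f = \<rho>]) (simp add: indicator_def fun_eq_iff)
  from fun_cong[OF this, of "\<sigma> j"] have "cnj c * c = 1"
    by (simp add: arv_inner_matrix_unit star_automorphism_delta_sigma[OF star_automorphism])
  then have "complex_of_real ((cmod c)\<^sup>2) = 1"
    by (simp only: complex_norm_square mult.commute)
  then have "(cmod c)\<^sup>2 = 1"
    by (rule of_real_eq_1_iff[THEN iffD1])
  then have "cmod c = 1"
    using norm_ge_zero[of c] by (auto simp: power2_eq_1_iff)
  with VE show ?thesis
    using that by blast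
qed

lemma mpow_pos_iff_sigma:
  assumes "n \<ge> 1"
  shows "0 < mpow P n i j \<longleftrightarrow> 0 < mpow Q n (\<sigma> i) (\<sigma> j)"
proof
  assume pos: "0 < mpow P n i j"
  obtain c where c: "cmod c = 1" "V n (matrix_unit i j 1) = matrix_unit (\<sigma> i) (\<sigma> j) c"
    by (rule V_matrix_unit[OF assms pos])
  have "matrix_unit i j 1 \<in> arv P n"
    by (rule matrix_unit_in_arv) (use pos in simp)
  then have "matrix_unit (\<sigma> i) (\<sigma> j) c \<in> arv Q n"
    using V_image[OF assms(1)] c(2) by (metis imageI)
  then have "mpow Q n (\<sigma> i) (\<sigma> j) = 0 \<longrightarrow> matrix_unit (\<sigma> i) (\<sigma> j) c (\<sigma> i) (\<sigma> j) = 0"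
    unfolding arv_def by blast
  then have "mpow Q n (\<sigma> i) (\<sigma> j) \<noteq> 0"
    using c(1) by (auto simp: matrix_unit_def)
  then show "0 < mpow Q n (\<sigma> i) (\<sigma> j)"
    using mpow_nonneg[OF stochastic_Q, of n "\<sigma> i" "\<sigma> j"] by simp
next
  assume pos: "0 < mpow Q n (\<sigma> i) (\<sigma> j)"
  show "0 < mpow P n i j"
  proof (rule ccontr)
    assume "\<not> 0 < mpow P n i j"
    then have zero: "mpow P n i j = 0"
      using mpow_nonneg[OF stochastic_P, of n i j] by simp
    have "matrix_unit (\<sigma> i) (\<sigma> j) 1 \<in> V n ` arv P n"
      unfolding V_image[OF assms(1)] by (rule matrix_unit_in_arv) (use pos in simp)
    then obtain A where A: "A \<in> arv P n" "V n A = matrix_unit (\<sigma> i) (\<sigma> j) 1"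
      by (metis imageE)
    have "A i j = 0"
      using A(1) zero unfolding arv_def by blast
    then have "arv_act (delta i) A (delta j) = (\<lambda>a b. 0 * A a b)"
      by (simp add: arv_act_delta matrix_unit_def)
    then have "V n (arv_act (delta i) A (delta j)) = (\<lambda>_ _. 0)"
      using V_scale[OF assms(1) A(1), of 0] by simp
    moreover have "V n (arv_act (delta i) A (delta j)) = matrix_unit (\<sigma> i) (\<sigma> j) 1"
      using V_delta_act[OF assms(1) A(1)] A(2) by (simp add: arv_act_delta matrix_unit_def)
    ultimately have "(\<lambda>_ _. 0) = matrix_unit (\<sigma> i) (\<sigma> j) 1"
      by simp
    from fun_cong[OF fun_cong[OF this, of "\<sigma> i"], of "\<sigma> j"] show False
      by (simp add: matrix_unit_def)
  qed
qed

abbreviation Q\<^sub>\<sigma> :: "'a \<Rightarrow> 'a \<Rightarrow> real" where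
  "Q\<^sub>\<sigma> \<equiv> \<lambda>x y. Q (\<sigma> x) (\<sigma> y)"

lemma mpow_Q_sigma: "mpow Q\<^sub>\<sigma> n x y = mpow Q n (\<sigma> x) (\<sigma> y)"
  by (rule mpow_relabel[OF bij_sigma])

text \<open>Compare the \<open>(\<sigma> x, \<sigma> z)\<close> entries of \<open>V\<^sub>n\<^sub>+\<^sub>m \<circ> U\<^sup>P\<^sub>n\<^sub>,\<^sub>m = U\<^sup>Q\<^sub>n\<^sub>,\<^sub>m \<circ> (V\<^sub>n \<otimes> V\<^sub>m)\<close> on
  \<open>E\<^sub>x\<^sub>y \<otimes> E\<^sub>y\<^sub>z\<close>; the unimodular factors of \<open>V_matrix_unit\<close> disappear in absolute value.\<close>
lemma path_weight_eq:
  assumes n: "n \<ge> 1" and m: "m \<ge> 1" and xy: "0 < mpow P n x y" and yz: "0 < mpow P m y z"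
  shows "path_weight P n m x y z = path_weight Q\<^sub>\<sigma> n m x y z"
proof -
  have nm: "n + m \<ge> 1" using n by simp
  have xz: "0 < mpow P (n + m) x z"
    by (rule mpow_add_pos[OF stochastic_P xy yz])
  obtain c1 where c1: "cmod c1 = 1" "V n (matrix_unit x y 1) = matrix_unit (\<sigma> x) (\<sigma> y) c1"
    by (rule V_matrix_unit[OF n xy])
  obtain c2 where c2: "cmod c2 = 1" "V m (matrix_unit y z 1) = matrix_unit (\<sigma> y) (\<sigma> z) c2"
    by (rule V_matrix_unit[OF m yz])
  obtain c3 where c3: "cmod c3 = 1" "V (n + m) (matrix_unit x z 1) = matrix_unit (\<sigma> x) (\<sigma> z) c3"
    by (rule V_matrix_unit[OF nm xz])
  let ?wP = "complex_of_real (path_weight P n m x y z)"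
  let ?wQ = "complex_of_real (path_weight Q\<^sub>\<sigma> n m x y z)"
  have E: "matrix_unit x y 1 \<in> arv P n" "matrix_unit y z 1 \<in> arv P m"
    "matrix_unit x z 1 \<in> arv P (n + m)"
    using xy yz xz by (auto intro: matrix_unit_in_arv)
  have "arvU P n m (matrix_unit x y 1) (matrix_unit y z 1) = (\<lambda>a b. ?wP * matrix_unit x z 1 a b)"
    unfolding arvU_matrix_unit matrix_unit_scale[symmetric] by simp
  then have "V (n + m) (arvU P n m (matrix_unit x y 1) (matrix_unit y z 1)) = (\<lambda>a b. ?wP * matrix_unit (\<sigma> x) (\<sigma> z) c3 a b)"
    using V_scale[OF nm E(3), of ?wP] c3(2) by simp
  moreover have "arvU Q n m (V n (matrix_unit x y 1)) (V m (matrix_unit y z 1)) = matrix_unit (\<sigma> x) (\<sigma> z) (?wQ * (c1 * c2))"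
    unfolding c1(2) c2(2) arvU_matrix_unit path_weight_def mpow_Q_sigma ..
  ultimately have "(\<lambda>a b. ?wP * matrix_unit (\<sigma> x) (\<sigma> z) c3 a b) = matrix_unit (\<sigma> x) (\<sigma> z) (?wQ * (c1 * c2))"
    using V_arvU[OF n m E(1,2)] by simp
  from fun_cong[OF fun_cong[OF this, of "\<sigma> x"], of "\<sigma> z"] have "?wP * c3 = ?wQ * (c1 * c2)"
    by (simp add: matrix_unit_def)
  then have "cmod (?wP * c3) = cmod (?wQ * (c1 * c2))"
    by (rule arg_cong)
  then have "\<bar>path_weight P n m x y z\<bar> = \<bar>path_weight Q\<^sub>\<sigma> n m x y z\<bar>"
    using c1(1) c2(1) c3(1) unfolding norm_mult by simp
  then show ?thesis
    using path_weight_nonneg[OF stochastic_P] path_weight_nonneg[OF stochastic_relabel[OF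
        bij_sigma stochastic_Q]] by simp
qed

lemma cocycle_equivalent_relabel:
  assumes "recurrent P" "recurrent Q"
  shows "cocycle_equivalent P Q\<^sub>\<sigma>"
proof
  show "stochastic P" "stochastic Q\<^sub>\<sigma>" "recurrent P" "recurrent Q\<^sub>\<sigma>"
    by (fact stochastic_P stochastic_relabel[OF bij_sigma stochastic_Q] assms(1)
        recurrent_relabel[OF bij_sigma assms(2)])+
  show "n \<ge> 1 \<Longrightarrow> 0 < mpow P n x y \<longleftrightarrow> 0 < mpow Q\<^sub>\<sigma> n x y" for n x y
    unfolding mpow_Q_sigma by (rule mpow_pos_iff_sigma)
  show "mpow P n x y * mpow P m y z * mpow Q\<^sub>\<sigma> (n + m) x z = mpow Q\<^sub>\<sigma> n x y * mpow Q\<^sub>\<sigma> m y z * mpow P (n + m) x z"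
    if "n \<ge> 1" "m \<ge> 1" "0 < mpow P n x y" "0 < mpow P m y z" for n m x y z
    by (rule path_weight_eq_imp[OF path_weight_eq[OF that] that(3,4) mpow_add_pos[OF stochastic_P that(3,4)]])
       (simp_all add: mpow_nonneg[OF stochastic_relabel[OF bij_sigma stochastic_Q]])
qed

end

theorem mainTheorem9:
  fixes P Q :: "'a::countable \<Rightarrow> 'a \<Rightarrow> real"
    and \<rho> :: "('a \<Rightarrow> complex) \<Rightarrow> ('a \<Rightarrow> complex)"
  assumes "stochastic P" and "stochastic Q"
    and "recurrent P" and "recurrent Q"
    and "star_automorphism \<rho>"
    and "\<exists>V. rho_unitary_iso P Q \<rho> V"
  shows "\<forall>i j. P i j = Q (sigma_of \<rho> i) (sigma_of \<rho> j)"
proof -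
  obtain V where "rho_unitary_iso P Q \<rho> V"
    using assms(6) by blast
  with assms(1,2,5) interpret rho_unitary P Q \<rho> V
    by unfold_locales
  interpret cocycle_equivalent P Q\<^sub>\<sigma>
    by (rule cocycle_equivalent_relabel[OF assms(3,4)])
  show ?thesis
    using P_eq_Q by (simp add: fun_eq_iff)
qed

end
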